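(* Let $m\ge2$, $1\le p<\infty$ and $1\le j\le m$. Then for all $s\in\mathbb R$, $$\sum_{n\in\mathbb N^m,\ |n|=k}|sn_j-1|^p\approx k^{p+m-1}|s|^p+k^{m-1},$$ where the constants in $\approx$ may depend on $p$ and $m$ but not on $k$ or $s$.
   Context: For quantities $F_k,G_k$ depending on $k\in\mathbb N$, $F_k\approx G_k$ means there are positive constants $A,B,k_0$ with $AG_k\le F_k\le BG_k$ for all $k\ge k_0$. $|n|=n_1+\dots+n_m$. *)

theory Defs
  imports Complex_Main
begin

text \<open>Multi-indices n in N^m (N including 0), represented as functions
  nat => nat supported on {1..m}, with |n| = n_1 + ... + n_m = k.\<close>
definition multi_indices :: "nat \<Rightarrow> nat \<Rightarrow> (nat \<Rightarrow> nat) set" where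
  "multi_indices m k = {n. (\<forall>i. i \<notin> {1..m} \<longrightarrow> n i = 0) \<and> (\<Sum>i=1..m. n i) = k}"

end

theory Submission
  imports Defs "HOL-Library.FuncSet"
begin

text \<open>The upper bound is crude: every term is at most 2^p ((|s| k)^p + 1), and a multi-index
  is determined by its last m - 1 coordinates, so there are at most (k + 1)^(m-1) terms.
  For the lower bound put h = k div m. Fixing n_j = t <= h, all coordinates except j and one other
  index i0 may range freely over {0..h} while n_i0 absorbs the rest of k, so the sum dominates
  (h + 1)^(m-2) copies of the one-dimensional sum S = (SUM t<=h. |s t - 1|^p). Finally
  S is of order (h + 1) (1 + (|s| h)^p): if |s| h <= 1/2 every term is at least 2^-p, and otherwise
  pairing t with t + ceil(h/2) shows that one term of each pair is at least (|s| h / 4)^p.\<close>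

lemma powr_add_le_two_powr:
  fixes x y p :: real
  assumes "0 \<le> x" "0 \<le> y" "0 \<le> p"
  shows "(x + y) powr p \<le> 2 powr p * (x powr p + y powr p)"
proof -
  define M where "M = max x y"
  have "(x + y) powr p \<le> (2 * M) powr p"
    using assms unfolding M_def by (intro powr_mono2) auto
  also have "\<dots> = 2 powr p * M powr p"
    using assms unfolding M_def by (simp add: powr_mult)
  also have "M powr p \<le> x powr p + y powr p"
    unfolding M_def by (cases "x \<le> y") auto
  hence "2 powr p * M powr p \<le> 2 powr p * (x powr p + y powr p)"
    by (intro mult_left_mono) auto
  finally show ?thesis .
qed

lemma sum_abs_affine_powr_ge_small_slope:
  fixes s p :: real
  assumes "0 \<le> p" and "\<bar>s\<bar> * real h \<le> 1/2"
  shows "(real h + 1) / 2 powr p \<le> (\<Sum>t=0..h. \<bar>s * real t - 1\<bar> powr p)"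
proof -
  have "(1/2) powr p \<le> \<bar>s * real t - 1\<bar> powr p" if "t \<in> {0..h}" for t
  proof -
    have "\<bar>s * real t\<bar> \<le> \<bar>s\<bar> * real h"
      using that by (simp add: abs_mult mult_left_mono)
    hence "1/2 \<le> \<bar>s * real t - 1\<bar>"
      using assms(2) by linarith
    thus ?thesis
      using assms(1) by (intro powr_mono2) auto
  qed
  hence "(\<Sum>t=0..h. (1/2::real) powr p) \<le> (\<Sum>t=0..h. \<bar>s * real t - 1\<bar> powr p)"
    by (rule sum_mono)
  thus ?thesis
    by (simp add: powr_divide add.commute)
qed

lemma abs_affine_powr_pair_ge:
  fixes s p :: real
  assumes "0 \<le> p" and "real h \<le> 2 * real d"
  shows "(\<bar>s\<bar> * real h / 4) powr p
           \<le> \<bar>s * real t - 1\<bar> powr p + \<bar>s * real (t + d) - 1\<bar> powr p"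
proof -
  have "real h / 2 \<le> real d"
    using assms(2) by linarith
  hence "\<bar>s\<bar> * real h / 2 \<le> \<bar>s\<bar> * real d"
    by (metis abs_ge_zero mult_left_mono times_divide_eq_right)
  also have "\<bar>s\<bar> * real d = \<bar>(s * real (t + d) - 1) - (s * real t - 1)\<bar>"
    by (simp add: algebra_simps abs_mult)
  finally have "\<bar>s\<bar> * real h / 4 \<le> \<bar>s * real t - 1\<bar>
                \<or> \<bar>s\<bar> * real h / 4 \<le> \<bar>s * real (t + d) - 1\<bar>"
    by linarith
  hence "(\<bar>s\<bar> * real h / 4) powr p \<le> \<bar>s * real t - 1\<bar> powr p
         \<or> (\<bar>s\<bar> * real h / 4) powr p \<le> \<bar>s * real (t + d) - 1\<bar> powr p"
    using assms(1) by (auto intro: powr_mono2)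
  thus ?thesis
    using powr_ge_zero[of "\<bar>s * real t - 1\<bar>" p] powr_ge_zero[of "\<bar>s * real (t + d) - 1\<bar>" p]
    by linarith
qed

lemma sum_abs_affine_powr_ge_large_slope:
  fixes s p :: real
  assumes "0 \<le> p"
  shows "(real h + 1) * (\<bar>s\<bar> * real h) powr p / (4 * 4 powr p)
           \<le> (\<Sum>t=0..h. \<bar>s * real t - 1\<bar> powr p)"
proof -
  define f where "f t = \<bar>s * real t - 1\<bar> powr p" for t
  define d where "d = h - h div 2"
  define Y where "Y = (\<bar>s\<bar> * real h / 4) powr p"
  have f_nonneg: "0 \<le> f t" for t
    unfolding f_def by simp
  have pair: "Y \<le> f t + f (t + d)" for t
    unfolding Y_def f_def d_def using assms by (intro abs_affine_powr_pair_ge) linarith+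
  have "(real (h div 2) + 1) * Y = (\<Sum>t=0..h div 2. Y)"
    by simp
  also have "\<dots> \<le> (\<Sum>t=0..h div 2. f t) + (\<Sum>t=0..h div 2. f (t + d))"
    unfolding sum.distrib[symmetric] by (rule sum_mono) (rule pair)
  also have "(\<Sum>t=0..h div 2. f t) \<le> sum f {0..h}"
    by (rule sum_mono2) (auto simp: f_nonneg)
  also have "(\<Sum>t=0..h div 2. f (t + d)) = sum f {d..h div 2 + d}"
    using sum.shift_bounds_cl_nat_ivl[of f 0 d "h div 2"] by simp
  also have "\<dots> \<le> sum f {0..h}"
    by (rule sum_mono2) (auto simp: f_nonneg d_def)
  finally have half: "(real (h div 2) + 1) * Y \<le> 2 * sum f {0..h}"
    by simp
  have "h \<le> 2 * (h div 2) + 1"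
    by presburger
  hence "real h + 1 \<le> 2 * (real (h div 2) + 1)"
    using of_nat_mono[where 'a=real] by fastforce
  hence "(real h + 1) * Y \<le> 2 * (real (h div 2) + 1) * Y"
    by (rule mult_right_mono) (simp add: Y_def)
  also have "\<dots> \<le> 4 * sum f {0..h}"
    using half by linarith
  finally have whole: "(real h + 1) * Y \<le> 4 * sum f {0..h}" .
  have "(real h + 1) * (\<bar>s\<bar> * real h) powr p / (4 * 4 powr p) = (real h + 1) * Y / 4"
    unfolding Y_def by (simp add: powr_divide)
  also have "\<dots> \<le> sum f {0..h}"
    using whole by simp
  finally show ?thesis
    unfolding f_def .
qed

lemma sum_abs_affine_powr_ge:
  fixes s p :: real
  assumes "0 \<le> p"
  shows "(real h + 1) * (1 + (\<bar>s\<bar> * real h) powr p) / (8 * 8 powr p)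
           \<le> (\<Sum>t=0..h. \<bar>s * real t - 1\<bar> powr p)"
proof -
  define X where "X = (\<bar>s\<bar> * real h) powr p"
  have two_le: "1 \<le> 2 powr p" and eight: "8 powr p = 2 powr p * 4 powr p"
    using assms by (simp_all add: ge_one_powr_ge_zero flip: powr_mult)
  show ?thesis
  proof (cases "\<bar>s\<bar> * real h \<le> 1/2")
    case True
    have "X \<le> 1"
      unfolding X_def using True assms by (intro powr_le1) auto
    hence "(1 + X) * 2 powr p \<le> 2 * 2 powr p"
      by (intro mult_right_mono) auto
    also have "\<dots> \<le> 8 * 8 powr p"
      using assms powr_mono2[of p 2 8] powr_ge_zero[of 8 p] by linarith
    finally have "(1 + X) / (8 * 8 powr p) \<le> 1 / 2 powr p"
      by (simp add: divide_simps)
    hence "(real h + 1) * (1 + X) / (8 * 8 powr p) \<le> (real h + 1) / 2 powr p"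
      using mult_left_mono[of _ _ "real h + 1"] by fastforce
    thus ?thesis
      unfolding X_def using sum_abs_affine_powr_ge_small_slope[OF assms True] by linarith
  next
    case False
    have "(1/2) powr p \<le> X"
      unfolding X_def using False assms by (intro powr_mono2) auto
    hence "1 / 2 powr p \<le> X"
      by (simp add: powr_divide)
    moreover have "1 * X \<le> 2 powr p * X"
      using two_le by (intro mult_right_mono) (simp_all add: X_def)
    ultimately have "1 + X \<le> 2 * (2 powr p * X)"
      by (simp add: divide_simps mult.commute)
    hence "(real h + 1) * (1 + X) / (8 * 8 powr p)
             \<le> (real h + 1) * (2 * (2 powr p * X)) / (8 * 8 powr p)"
      by (intro divide_right_mono mult_left_mono) auto
    also have "\<dots> = (real h + 1) * X / (4 * 4 powr p)"
      by (simp add: eight field_simps)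
    finally have "(real h + 1) * (1 + X) / (8 * 8 powr p) \<le> (real h + 1) * X / (4 * 4 powr p)" .
    thus ?thesis
      unfolding X_def using sum_abs_affine_powr_ge_large_slope[OF assms, of h s] by linarith
  qed
qed

lemma multi_indices_le: "n \<in> multi_indices m k \<Longrightarrow> n i \<le> k"
  unfolding multi_indices_def
  by (cases "i \<in> {1..m}") (auto intro: member_le_sum)

lemma finite_multi_indices: "finite (multi_indices m k)"
proof (rule finite_subset)
  show "multi_indices m k
          \<subseteq> {n. \<forall>i. (i \<in> {1..m} \<longrightarrow> n i \<in> {0..k}) \<and> (i \<notin> {1..m} \<longrightarrow> n i = 0)}"
    using multi_indices_le by (auto simp: multi_indices_def)
qed (intro finite_set_of_finite_funs; simp)

lemma card_multi_indices_le:
  assumes "1 \<le> m"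
  shows "card (multi_indices m k) \<le> (k + 1) ^ (m - 1)"
proof -
  have sum_split: "sum n {1..m} = n 1 + sum n {2..m}" for n :: "nat \<Rightarrow> nat"
    using assms by (simp add: sum.atLeast_Suc_atMost numeral_2_eq_2)
  have "inj_on (\<lambda>n. restrict n {2..m}) (multi_indices m k)"
  proof (rule inj_onI)
    fix n n' assume n: "n \<in> multi_indices m k" and n': "n' \<in> multi_indices m k"
      and eq: "restrict n {2..m} = restrict n' {2..m}"
    hence tail: "n i = n' i" if "i \<in> {2..m}" for i
      using that by (metis restrict_apply')
    hence "sum n {2..m} = sum n' {2..m}"
      by (intro sum.cong) auto
    hence "n 1 = n' 1"
      using n n' sum_split[of n] sum_split[of n'] by (simp add: multi_indices_def)
    show "n = n'"
    proof
      fix i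
      show "n i = n' i"
        using n n' tail \<open>n 1 = n' 1\<close>
        by (cases "i = 1"; cases "i \<in> {2..m}") (auto simp: multi_indices_def)
    qed
  qed
  moreover have "(\<lambda>n. restrict n {2..m}) ` multi_indices m k \<subseteq> PiE {2..m} (\<lambda>_. {0..k})"
    using multi_indices_le by auto
  ultimately have "card (multi_indices m k) \<le> card (PiE {2..m} (\<lambda>_. {0..k::nat}))"
    by (intro card_inj_on_le) (auto intro: finite_PiE)
  thus ?thesis
    by (simp add: card_PiE)
qed

lemma fill_in_multi_indices:
  fixes g :: "nat \<Rightarrow> nat"
  assumes R: "{1..m} = insert j (insert i0 R)" "j \<notin> insert i0 R" "i0 \<notin> R"
    and le_k: "t + sum g R \<le> k"
  shows "(\<lambda>i. if i \<in> R then g i else 0)(j := t, i0 := k - (t + sum g R)) \<in> multi_indices m k"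
    (is "?n \<in> _")
proof -
  have "finite R"
    by (metis R(1) finite_atLeastAtMost finite_insert)
  hence "sum ?n {1..m} = ?n j + (?n i0 + sum ?n R)"
    using R by simp
  also have "sum ?n R = sum g R"
    using R by (intro sum.cong) auto
  also have "?n j + (?n i0 + sum g R) = k"
    using R le_k by auto
  finally have "sum ?n {1..m} = k" .
  moreover have "?n i = 0" if "i \<notin> {1..m}" for i
    using R that by auto
  ultimately show ?thesis
    unfolding multi_indices_def by blast
qed

lemma card_mult_sum_le_sum_via_injection:
  fixes F :: "'a \<Rightarrow> real" and \<phi> :: "'a \<times> 'b \<Rightarrow> 'c"
  assumes "finite S" "finite T" "finite G"
    and "inj_on \<phi> (T \<times> G)" and "\<phi> ` (T \<times> G) \<subseteq> S"
    and "\<And>t g. t \<in> T \<Longrightarrow> g \<in> G \<Longrightarrow> \<pi> (\<phi> (t, g)) = t"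
    and "\<And>x. x \<in> S \<Longrightarrow> 0 \<le> F (\<pi> x)"
  shows "real (card G) * (\<Sum>t\<in>T. F t) \<le> (\<Sum>x\<in>S. F (\<pi> x))"
proof -
  have "real (card G) * (\<Sum>t\<in>T. F t) = (\<Sum>(t, g)\<in>T \<times> G. F t)"
    by (simp add: sum.cartesian_product[symmetric] sum_distrib_right mult.commute)
  also have "\<dots> = (\<Sum>y\<in>T \<times> G. F (\<pi> (\<phi> y)))"
    using assms(6) by (intro sum.cong) auto
  also have "\<dots> = (\<Sum>x\<in>\<phi> ` (T \<times> G). F (\<pi> x))"
    using assms(4) by (simp add: sum.reindex)
  also have "\<dots> \<le> (\<Sum>x\<in>S. F (\<pi> x))"
    using assms by (intro sum_mono2) auto
  finally show ?thesis .
qed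

lemma sum_multi_indices_coordinate_ge:
  fixes F :: "nat \<Rightarrow> real"
  assumes m: "2 \<le> m" and j: "j \<in> {1..m}" and k: "m * h \<le> k" and F: "\<And>t. 0 \<le> F t"
  shows "real ((h + 1) ^ (m - 2)) * (\<Sum>t=0..h. F t) \<le> (\<Sum>n\<in>multi_indices m k. F (n j))"
proof -
  define i0 where "i0 = (if j = 1 then 2 else 1 :: nat)"
  have i0: "i0 \<in> {1..m}" "i0 \<noteq> j"
    using m j by (auto simp: i0_def)
  define R where "R = {1..m} - {j, i0}"
  define G where "G = PiE R (\<lambda>_. {0..h})"
  define \<phi> where "\<phi> = (\<lambda>(t, g). (\<lambda>i. if i \<in> R then g i else 0)(j := t, i0 := k - (t + sum g R)))"
  have fin_R: "finite R"
    unfolding R_def by simp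
  have card_R: "card R = m - 2"
    unfolding R_def using i0 j by (simp add: card_Diff_subset)
  have \<phi>_j: "\<phi> (t, g) j = t" and \<phi>_R: "i \<in> R \<Longrightarrow> \<phi> (t, g) i = g i" for t g i
    using i0 j by (auto simp: \<phi>_def R_def)
  have "inj_on \<phi> ({0..h} \<times> G)"
  proof (rule inj_on_inverseI)
    fix x assume "x \<in> {0..h} \<times> G"
    then obtain t g where x: "x = (t, g)" and g: "g \<in> G"
      by blast
    have "restrict (\<phi> (t, g)) R = g"
      using g \<phi>_R by (auto simp: G_def PiE_def extensional_def fun_eq_iff)
    thus "(\<lambda>n. (n j, restrict n R)) (\<phi> x) = x"
      by (simp add: x \<phi>_j)
  qed
  moreover have "\<phi> ` ({0..h} \<times> G) \<subseteq> multi_indices m k"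
  proof safe
    fix t g assume t: "t \<in> {0..h}" and g: "g \<in> G"
    have "sum g R \<le> card R * h"
      using g sum_bounded_above[of R g h] by (auto simp: G_def PiE_iff)
    also have "\<dots> + t \<le> (m - 2) * h + 2 * h"
      using t card_R by simp
    also have "\<dots> = m * h"
      using m by (metis add_mult_distrib le_add_diff_inverse2)
    finally have "t + sum g R \<le> k"
      using k by linarith
    moreover have "{1..m} = insert j (insert i0 R)" and "j \<notin> insert i0 R" and "i0 \<notin> R"
      unfolding R_def using i0 j by auto
    ultimately show "\<phi> (t, g) \<in> multi_indices m k"
      unfolding \<phi>_def by (simp add: fill_in_multi_indices)
  qed
  moreover have "card G = (h + 1) ^ (m - 2)"
    unfolding G_def using card_R by (simp add: card_PiE R_def)
  ultimately show ?thesis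
    using card_mult_sum_le_sum_via_injection[of "multi_indices m k" "{0..h}" G \<phi> "\<lambda>n. n j" F] fin_R
    by (simp add: finite_multi_indices G_def finite_PiE F \<phi>_j)
qed

lemma sum_multi_indices_upper:
  fixes s p :: real
  assumes "1 \<le> m" and "1 \<le> k" and "0 \<le> p"
  shows "(\<Sum>n\<in>multi_indices m k. \<bar>s * real (n j) - 1\<bar> powr p)
           \<le> 2 ^ (m - 1) * 2 powr p * real k ^ (m - 1) * ((\<bar>s\<bar> * real k) powr p + 1)"
proof -
  have "\<bar>s * real (n j) - 1\<bar> powr p \<le> 2 powr p * ((\<bar>s\<bar> * real k) powr p + 1)"
    if "n \<in> multi_indices m k" for n
  proof -
    have "\<bar>s * real (n j)\<bar> \<le> \<bar>s\<bar> * real k"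
      using multi_indices_le[OF that, of j] by (simp add: abs_mult mult_left_mono)
    hence "\<bar>s * real (n j) - 1\<bar> powr p \<le> (\<bar>s\<bar> * real k + 1) powr p"
      using assms(3) by (intro powr_mono2) auto
    also have "\<dots> \<le> 2 powr p * ((\<bar>s\<bar> * real k) powr p + 1 powr p)"
      using assms(3) by (intro powr_add_le_two_powr) auto
    finally show ?thesis
      by simp
  qed
  hence "(\<Sum>n\<in>multi_indices m k. \<bar>s * real (n j) - 1\<bar> powr p)
           \<le> real (card (multi_indices m k)) * (2 powr p * ((\<bar>s\<bar> * real k) powr p + 1))"
    by (rule sum_bounded_above)
  also have "\<dots> \<le> (2 * real k) ^ (m - 1) * (2 powr p * ((\<bar>s\<bar> * real k) powr p + 1))"
  proof (intro mult_right_mono)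
    have "card (multi_indices m k) \<le> (k + 1) ^ (m - 1)"
      using assms(1) by (rule card_multi_indices_le)
    also have "\<dots> \<le> (2 * k) ^ (m - 1)"
      using assms(2) by (intro power_mono) auto
    finally show "real (card (multi_indices m k)) \<le> (2 * real k) ^ (m - 1)"
      by (metis of_nat_le_iff of_nat_mult of_nat_numeral of_nat_power)
  qed auto
  finally show ?thesis
    by (simp add: power_mult_distrib mult_ac)
qed

lemma sum_multi_indices_ge_power:
  fixes s p :: real
  assumes m: "2 \<le> m" and j: "j \<in> {1..m}" and k: "m * h \<le> k" and p: "0 \<le> p"
  shows "(real h + 1) ^ (m - 1) * (1 + (\<bar>s\<bar> * real h) powr p) / (8 * 8 powr p)
           \<le> (\<Sum>n\<in>multi_indices m k. \<bar>s * real (n j) - 1\<bar> powr p)"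
proof -
  have "m - 1 = Suc (m - 2)"
    using m by simp
  hence "(real h + 1) ^ (m - 1) * (1 + (\<bar>s\<bar> * real h) powr p) / (8 * 8 powr p)
           = real ((h + 1) ^ (m - 2)) * ((real h + 1) * (1 + (\<bar>s\<bar> * real h) powr p) / (8 * 8 powr p))"
    by (simp add: power_Suc2 algebra_simps)
  also have "\<dots> \<le> real ((h + 1) ^ (m - 2)) * (\<Sum>t=0..h. \<bar>s * real t - 1\<bar> powr p)"
    using p by (intro mult_left_mono sum_abs_affine_powr_ge) auto
  also have "\<dots> \<le> (\<Sum>n\<in>multi_indices m k. \<bar>s * real (n j) - 1\<bar> powr p)"
    using m j k by (intro sum_multi_indices_coordinate_ge) auto
  finally show ?thesis .
qed

lemma real_le_mult_div_plus_one:
  assumes "0 < m"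
  shows "real k \<le> real m * (real (k div m) + 1)"
proof -
  have "k \<le> m * (k div m) + m"
    using mult_div_mod_eq[of m k] mod_less_divisor[OF assms, of k] by linarith
  hence "real k \<le> real m * real (k div m) + real m"
    by (metis of_nat_add of_nat_le_iff of_nat_mult)
  thus ?thesis
    by (simp add: algebra_simps)
qed

lemma sum_multi_indices_lower:
  fixes s p :: real
  assumes m: "2 \<le> m" and j: "j \<in> {1..m}" and k: "m \<le> k" and p: "0 \<le> p"
  shows "real k ^ (m - 1) * ((\<bar>s\<bar> * real k) powr p + 1)
           / (real m ^ (m - 1) * (2 * real m) powr p * (8 * 8 powr p))
         \<le> (\<Sum>n\<in>multi_indices m k. \<bar>s * real (n j) - 1\<bar> powr p)"
proof -
  define h where "h = k div m"
  have "1 \<le> h"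
    unfolding h_def using div_le_mono[OF k, of m] m by simp
  have k_le: "real k \<le> real m * (real h + 1)"
    unfolding h_def using m by (intro real_le_mult_div_plus_one) auto
  have "real k / real m \<le> real h + 1"
    using k_le m by (simp add: divide_simps mult.commute)
  hence power_le: "real k ^ (m - 1) / real m ^ (m - 1) \<le> (real h + 1) ^ (m - 1)"
    by (simp add: power_divide[symmetric] power_mono)
  have "real m \<le> real m * real h"
    using \<open>1 \<le> h\<close> mult_left_mono[of 1 "real h" "real m"] by simp
  hence "real k \<le> 2 * real m * real h"
    using k_le by (simp add: algebra_simps)
  hence "\<bar>s\<bar> * real k \<le> 2 * real m * (\<bar>s\<bar> * real h)"
    by (metis abs_ge_zero mult.left_commute mult_left_mono)
  hence "(\<bar>s\<bar> * real k) powr p \<le> (2 * real m * (\<bar>s\<bar> * real h)) powr p"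
    using p by (intro powr_mono2) auto
  also have "\<dots> = (2 * real m) powr p * (\<bar>s\<bar> * real h) powr p"
    by (simp add: powr_mult)
  finally have "(\<bar>s\<bar> * real k) powr p \<le> (2 * real m) powr p * (\<bar>s\<bar> * real h) powr p" .
  moreover have "1 \<le> (2 * real m) powr p"
    using m p by (intro ge_one_powr_ge_zero) auto
  ultimately have powr_le: "((\<bar>s\<bar> * real k) powr p + 1) / (2 * real m) powr p
                              \<le> 1 + (\<bar>s\<bar> * real h) powr p"
    using m by (simp add: divide_simps algebra_simps)
  have "real k ^ (m - 1) * ((\<bar>s\<bar> * real k) powr p + 1)
          / (real m ^ (m - 1) * (2 * real m) powr p * (8 * 8 powr p))
        = (real k ^ (m - 1) / real m ^ (m - 1))
          * (((\<bar>s\<bar> * real k) powr p + 1) / (2 * real m) powr p) / (8 * 8 powr p)"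
    by simp
  also have "\<dots> \<le> (real h + 1) ^ (m - 1) * (1 + (\<bar>s\<bar> * real h) powr p) / (8 * 8 powr p)"
    using power_le powr_le by (intro divide_right_mono mult_mono) auto
  also have "\<dots> \<le> (\<Sum>n\<in>multi_indices m k. \<bar>s * real (n j) - 1\<bar> powr p)"
    using m j p by (intro sum_multi_indices_ge_power) (auto simp: h_def)
  finally show ?thesis .
qed

theorem lemma4p4:
  fixes m j :: nat and p :: real
  assumes "m \<ge> 2" and "1 \<le> p" and "1 \<le> j" and "j \<le> m"
  shows "\<exists>A B :: real. \<exists>k0 :: nat. A > 0 \<and> B > 0 \<and> k0 > 0 \<and>
    (\<forall>s :: real. \<forall>k \<ge> k0.
       A * (real k powr (p + real m - 1) * \<bar>s\<bar> powr p + real k ^ (m - 1))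
         \<le> (\<Sum>n\<in>multi_indices m k. \<bar>s * real (n j) - 1\<bar> powr p)
     \<and> (\<Sum>n\<in>multi_indices m k. \<bar>s * real (n j) - 1\<bar> powr p)
         \<le> B * (real k powr (p + real m - 1) * \<bar>s\<bar> powr p + real k ^ (m - 1)))"
proof -
  define A where "A = 1 / (real m ^ (m - 1) * (2 * real m) powr p * (8 * 8 powr p))"
  define B where "B = (2 ^ (m - 1) * 2 powr p :: real)"
  have shape: "real k powr (p + real m - 1) * \<bar>s\<bar> powr p + real k ^ (m - 1)
                 = real k ^ (m - 1) * ((\<bar>s\<bar> * real k) powr p + 1)"
    if "1 \<le> k" for k :: nat and s :: real
  proof -
    have "real k powr (p + real m - 1) = real k powr (p + real (m - 1))"
      using assms(1) by (simp add: of_nat_diff add_diff_eq)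
    also have "\<dots> = real k powr p * real k ^ (m - 1)"
      using that by (simp add: powr_add powr_realpow)
    finally show ?thesis
      by (simp add: powr_mult algebra_simps)
  qed
  have "A * (real k powr (p + real m - 1) * \<bar>s\<bar> powr p + real k ^ (m - 1))
          \<le> (\<Sum>n\<in>multi_indices m k. \<bar>s * real (n j) - 1\<bar> powr p)
        \<and> (\<Sum>n\<in>multi_indices m k. \<bar>s * real (n j) - 1\<bar> powr p)
          \<le> B * (real k powr (p + real m - 1) * \<bar>s\<bar> powr p + real k ^ (m - 1))"
    if "m \<le> k" for s k
    using sum_multi_indices_lower[of m j k p s] sum_multi_indices_upper[of m k p s j]
      shape[of k s] that assms by (simp add: A_def B_def mult_ac)
  moreover have "A > 0" "B > 0" "m > 0"
    using assms(1) by (simp_all add: A_def B_def)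
  ultimately show ?thesis
    by blast
qed

end
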